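(* Let $\delta>0$ be a real number and $d$ a positive integer. There exists a positive integer $M(\delta,d)$ with the following property. Let $P(x)=\sum_{k=1}^d\alpha_kx^k$ be a real polynomial of degree $d$ such that for every sufficiently large $N$ and for every $\eta=(\eta_1,\ldots,\eta_N)\in\mathbb R^N$ with $\|\eta\|_\infty\le\delta$ we have \[D_N\bigl(P(1)+\eta_1,P(2)+\eta_2,\ldots,P(N)+\eta_N\bigr)>4\delta.\] Then for all sufficiently large $N$, for every $k\in[1,d]$ there exist integers $p_k,q_k$ with $\gcd(p_k,q_k)=1$, $1\le q_k\le M(\delta,d)$ and \[\Bigl|\alpha_k-\frac{p_k}{q_k}\Bigr|\le N^{-\frac{(k+2)!}{2(d+2)!}}.\]
   Context: For real numbers $x_1,\ldots,x_N$, the discrepancy is $D_N(x_1,\ldots,x_N)=\sup_{I}\bigl|\frac1N\sum_{n=1}^N\chi_I(\{x_n\})-\lambda(I)\bigr|$, where the supremum is over intervals $I=[a,b)\subset[0,1)$, $\chi_I$ is the indicator function of $I$, $\lambda(I)=b-a$, and $\{x\}=x-\lfloor x\rfloor$ is the fractional part. $\|\eta\|_\infty=\max_n|\eta_n|$. *)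

theory Defs
  imports "HOL-Analysis.Analysis"
begin

definition discrepancy :: "nat \<Rightarrow> (nat \<Rightarrow> real) \<Rightarrow> real" where
  "discrepancy N x =
     (SUP ab \<in> {(a, b). 0 \<le> a \<and> a \<le> b \<and> b \<le> (1::real)}.
        \<bar>real (card {n \<in> {1..N}. frac (x n) \<in> {fst ab..<snd ab}}) / real N
          - (snd ab - fst ab)\<bar>)"

end

theory Submission
  imports Defs "HOL-Computational_Algebra.Polynomial"
begin

text \<open>If some coefficient \<open>\<alpha> k\<close> is not a rational with denominator at most \<open>M\<close>, then for
  every \<open>0 < \<bar>h\<bar> < R\<close> the Weyl sums of \<open>h P(n)\<close> are eventually below \<open>\<epsilon> N\<close>: by van der
  Corput differencing when the leading coefficient is far from rationals with small denominators,
  and in general after splitting \<open>n\<close> into residue classes modulo a factorial, which absorbs the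
  higher coefficients once they are rationals with small denominators. An Erdos-Turan type
  inequality, obtained by majorizing indicators of intervals with translates of the Fejer kernel,
  then bounds the discrepancy of \<open>P(1), \<dots>, P(N)\<close> itself by \<open>4 \<delta>\<close>, contradicting the
  hypothesis for the perturbation \<open>\<eta> = 0\<close>. Hence every \<open>\<alpha> k\<close> is exactly a rational with
  denominator at most \<open>M\<close>.\<close>

section \<open>Exponential sums and van der Corput's inequality\<close>

definition e :: "real \<Rightarrow> complex" where
  "e x = cis (2 * pi * x)"

definition weyl_sum :: "nat \<Rightarrow> (nat \<Rightarrow> real) \<Rightarrow> complex" where
  "weyl_sum N x = (\<Sum>n=1..N. e (x n))"

lemma e_add: "e (x + y) = e x * e y"
  by (simp add: e_def cis_mult distrib_left)

lemma e_diff: "e (x - y) = e x * cnj (e y)"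
  by (simp add: e_def cis_cnj cis_mult right_diff_distrib)

lemma norm_e [simp]: "norm (e x) = 1"
  by (simp add: e_def)

lemma e_0 [simp]: "e 0 = 1"
  by (simp add: e_def)

lemma e_power: "e x ^ n = e (real n * x)"
  unfolding e_def Complex.DeMoivre by (simp add: mult_ac)

lemma e_eq_1_iff: "e x = 1 \<longleftrightarrow> x \<in> \<int>"
proof
  assume "e x = 1"
  then have "cos (2 * pi * x) = 1"
    unfolding e_def by (metis Re_complex_of_real Re_rcis cis_rcis_eq mult_1 one_complex.sel(1))
  then obtain n :: int where "2 * pi * x = real_of_int n * 2 * pi"
    using cos_one_2pi_int by blast
  then show "x \<in> \<int>" by simp
qed (simp add: e_def)

lemma e_add_Ints: "z \<in> \<int> \<Longrightarrow> e (x + z) = e x"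
  by (simp add: e_add e_eq_1_iff)

lemma norm_sum_e_squared:
  "complex_of_real ((norm (\<Sum>a\<in>A. e (y a)))\<^sup>2) = (\<Sum>a\<in>A. \<Sum>b\<in>A. e (y a - y b))"
  by (simp only: complex_norm_square) (simp add: sum_product e_diff)

lemma eventually_le_mult_real:
  assumes "\<epsilon> > 0"
  shows "\<forall>\<^sub>F N in sequentially. C \<le> \<epsilon> * real N"
proof -
  have "\<forall>\<^sub>F N in sequentially. C / \<epsilon> \<le> real N"
    using filterlim_real_sequentially by (simp add: filterlim_at_top)
  then show ?thesis
    by eventually_elim (use assms in \<open>simp add: pos_divide_le_eq mult.commute\<close>)
qed

lemma sum_diagonal_le:
  fixes A B :: real
  assumes "B \<ge> 0"
  shows "(\<Sum>a<H. \<Sum>b<H. if a = b then A else B) \<le> real H * A + real H * real H * B"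
proof -
  have "(\<Sum>b<H. if a = b then A else B) \<le> A + real H * B" if "a < H" for a
  proof -
    have "(\<Sum>b<H. if a = b then A else B) \<le> (\<Sum>b<H. (if a = b then A else 0) + B)"
      using assms by (intro sum_mono) auto
    also have "\<dots> = A + real H * B"
      using that by (simp add: sum.distrib)
    finally show ?thesis .
  qed
  then have "(\<Sum>a<H. \<Sum>b<H. if a = b then A else B) \<le> (\<Sum>a<H. A + real H * B)"
    by (intro sum_mono) auto
  then show ?thesis
    by (simp add: algebra_simps)
qed

lemma norm_sum_shift_diff_le:
  fixes u :: "nat \<Rightarrow> 'a::real_normed_vector"
  assumes "\<And>n. norm (u n) \<le> 1"
  shows "norm ((\<Sum>n=1..N. u (n + a)) - (\<Sum>n=1..N. u n)) \<le> 2 * real a"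
proof (induction a)
  case (Suc a)
  have "(\<Sum>n=1..N. u (n + Suc a)) = (\<Sum>n=1..N. u (n + a)) + (u (N + 1 + a) - u (1 + a))"
    by (induction N) (simp_all add: sum.cl_ivl_Suc algebra_simps)
  then have "(\<Sum>n=1..N. u (n + Suc a)) - (\<Sum>n=1..N. u n)
      = ((\<Sum>n=1..N. u (n + a)) - (\<Sum>n=1..N. u n)) + (u (N + 1 + a) - u (1 + a))"
    by simp
  also have "norm \<dots> \<le> norm ((\<Sum>n=1..N. u (n + a)) - (\<Sum>n=1..N. u n)) + norm (u (N + 1 + a) - u (1 + a))"
    by (rule norm_triangle_ineq)
  also have "\<dots> \<le> 2 * real a + (norm (u (N + 1 + a)) + norm (u (1 + a)))"
    using Suc.IH norm_triangle_ineq4 by (rule add_mono)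
  also have "\<dots> \<le> 2 * real a + 2"
    using assms[of "N + 1 + a"] assms[of "1 + a"] by simp
  finally show ?case
    by simp
qed simp

lemma weyl_sum_shift_average:
  assumes "H \<ge> 1"
  shows "norm (weyl_sum N x - (\<Sum>n=1..N. \<Sum>a<H. e (x (n + a))) / of_nat H) \<le> 2 * real H"
proof -
  define u where "u n = e (x n)" for n
  have "weyl_sum N x - (\<Sum>n=1..N. \<Sum>a<H. u (n + a)) / of_nat H
      = (\<Sum>a<H. (\<Sum>n=1..N. u n) - (\<Sum>n=1..N. u (n + a))) / of_nat H"
    using assms unfolding weyl_sum_def u_def sum_subtractf sum.swap[of _ "{1..N}" "{..<H}"]
    by (simp add: diff_divide_distrib flip: sum_distrib_left)
  also have "norm \<dots> \<le> (\<Sum>a<H. 2 * real H) / real H"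
    unfolding norm_divide norm_of_nat
  proof (intro divide_right_mono order_trans[OF norm_sum] sum_mono)
    fix a assume "a \<in> {..<H}"
    then show "norm ((\<Sum>n=1..N. u n) - (\<Sum>n=1..N. u (n + a))) \<le> 2 * real H"
      using norm_sum_shift_diff_le[where u=u and N=N and a=a] by (simp add: u_def norm_minus_commute)
  qed simp
  also have "\<dots> = 2 * real H"
    using assms by simp
  finally show ?thesis
    by (simp add: u_def)
qed

lemma sum_norm_window_squared_le:
  assumes "\<eta> \<ge> 0"
    and diff: "\<And>a b. a < H \<Longrightarrow> b < H \<Longrightarrow> a \<noteq> b \<Longrightarrow>
      norm (weyl_sum N (\<lambda>n. x (n + a) - x (n + b))) \<le> \<eta> * real N"
  shows "(\<Sum>n=1..N. (norm (\<Sum>a<H. e (x (n + a))))\<^sup>2) \<le> real H * real N + real H * real H * (\<eta> * real N)"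
proof -
  have "complex_of_real (\<Sum>n=1..N. (norm (\<Sum>a<H. e (x (n + a))))\<^sup>2)
      = (\<Sum>n=1..N. \<Sum>a<H. \<Sum>b<H. e (x (n + a) - x (n + b)))"
    unfolding of_real_sum by (simp only: norm_sum_e_squared)
  also have "\<dots> = (\<Sum>a<H. \<Sum>n=1..N. \<Sum>b<H. e (x (n + a) - x (n + b)))"
    by (rule sum.swap)
  also have "\<dots> = (\<Sum>a<H. \<Sum>b<H. weyl_sum N (\<lambda>n. x (n + a) - x (n + b)))"
    unfolding weyl_sum_def by (intro sum.cong refl sum.swap)
  finally have sq: "complex_of_real (\<Sum>n=1..N. (norm (\<Sum>a<H. e (x (n + a))))\<^sup>2)
      = (\<Sum>a<H. \<Sum>b<H. weyl_sum N (\<lambda>n. x (n + a) - x (n + b)))" .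
  have "(\<Sum>n=1..N. (norm (\<Sum>a<H. e (x (n + a))))\<^sup>2)
      = Re (\<Sum>a<H. \<Sum>b<H. weyl_sum N (\<lambda>n. x (n + a) - x (n + b)))"
    unfolding sq[symmetric] by simp
  also have "\<dots> \<le> (\<Sum>a<H. \<Sum>b<H. norm (weyl_sum N (\<lambda>n. x (n + a) - x (n + b))))"
    by (rule order_trans[OF complex_Re_le_cmod], rule order_trans[OF norm_sum], rule sum_mono, rule norm_sum)
  also have "\<dots> \<le> (\<Sum>a<H. \<Sum>b<H. if a = b then real N else \<eta> * real N)"
  proof (intro sum_mono)
    fix a b assume "a \<in> {..<H}" "b \<in> {..<H}"
    then show "norm (weyl_sum N (\<lambda>n. x (n + a) - x (n + b))) \<le> (if a = b then real N else \<eta> * real N)"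
      using diff[of a b] by (cases "a = b") (simp_all add: weyl_sum_def)
  qed
  also have "\<dots> \<le> real H * real N + real H * real H * (\<eta> * real N)"
    using assms by (intro sum_diagonal_le) simp
  finally show ?thesis .
qed

theorem van_der_Corput:
  assumes "H \<ge> 1" "\<eta> \<ge> 0"
    and "\<And>a b. a < H \<Longrightarrow> b < H \<Longrightarrow> a \<noteq> b \<Longrightarrow>
      norm (weyl_sum N (\<lambda>n. x (n + a) - x (n + b))) \<le> \<eta> * real N"
  shows "norm (weyl_sum N x) \<le> real N * sqrt (1 / real H + \<eta>) + 2 * real H"
proof -
  define W where "W = (\<lambda>n. \<Sum>a<H. e (x (n + a)))"
  define s where "s = 1 / real H + \<eta>"
  have s: "s \<ge> 0" "real H * s = 1 + real H * \<eta>"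
    using assms unfolding s_def by (auto simp: field_simps)
  have "(norm (\<Sum>n=1..N. W n))\<^sup>2 \<le> (\<Sum>n=1..N. norm (W n))\<^sup>2"
    by (intro power_mono norm_sum) auto
  also have "\<dots> \<le> (\<Sum>n=1..N. (norm (W n))\<^sup>2) * real N"
    using sum_squared_le_sum_of_squares[of "\<lambda>n. norm (W n)" "{1..N}"] by simp
  also have "\<dots> \<le> (real H * real N + real H * real H * (\<eta> * real N)) * real N"
    unfolding W_def using sum_norm_window_squared_le[OF assms(2,3)] by (intro mult_right_mono) auto
  also have "\<dots> = real N * real N * real H * (1 + real H * \<eta>)"
    by (simp add: algebra_simps)
  also have "\<dots> = (real N * real H)\<^sup>2 * s"
    unfolding s(2)[symmetric] by (simp add: power2_eq_square mult_ac)
  also have "\<dots> = (real N * real H * sqrt s)\<^sup>2"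
    using s(1) by (simp add: power_mult_distrib)
  finally have "norm (\<Sum>n=1..N. W n) \<le> real N * real H * sqrt s"
    by (rule power2_le_imp_le) (use s(1) in auto)
  then have "norm (\<Sum>n=1..N. W n) / real H \<le> real N * real H * sqrt s / real H"
    by (rule divide_right_mono) simp
  then have avg: "norm ((\<Sum>n=1..N. W n) / of_nat H) \<le> real N * sqrt s"
    using assms(1) by (simp add: norm_divide)
  have "norm (weyl_sum N x) \<le> norm ((\<Sum>n=1..N. W n) / of_nat H)
      + norm (weyl_sum N x - (\<Sum>n=1..N. W n) / of_nat H)"
    by (rule norm_triangle_sub)
  also have "\<dots> \<le> real N * sqrt s + 2 * real H"
    using avg weyl_sum_shift_average[OF assms(1), of N x] unfolding W_def by (rule add_mono)
  finally show ?thesis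
    by (simp only: s_def)
qed

section \<open>Weyl sums of polynomials\<close>

lemma pcompose_power: "(p ^ n) \<circ>\<^sub>p q = (p \<circ>\<^sub>p q) ^ n"
  for p q :: "'a::comm_semiring_1 poly"
  by (induction n) (simp_all add: pcompose_mult pcompose_1)

lemma pcompose_as_sum_of_powers:
  fixes p q :: "'a::comm_semiring_1 poly"
  assumes "degree p \<le> n"
  shows "p \<circ>\<^sub>p q = (\<Sum>i\<le>n. smult (coeff p i) (q ^ i))"
proof -
  have "p \<circ>\<^sub>p q = (\<Sum>i\<le>n. monom (coeff p i) i) \<circ>\<^sub>p q"
    using poly_as_sum_of_monoms'[OF assms] by simp
  then show ?thesis
    by (simp add: pcompose_sum monom_altdef pcompose_smult pcompose_power pcompose_pCons)
qed

lemma coeff_linear_power_below: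
  "coeff ([:a, 1:] ^ Suc k) k = of_nat (Suc k) * (a :: 'a::comm_semiring_1)"
proof (induction k)
  case (Suc k)
  have "[:a, 1:] ^ Suc (Suc k) = smult a ([:a, 1:] ^ Suc k) + pCons 0 ([:a, 1:] ^ Suc k)"
    by (simp del: power_Suc add: power_Suc[of _ "Suc k"])
  then have "coeff ([:a, 1:] ^ Suc (Suc k)) (Suc k)
      = a * coeff ([:a, 1:] ^ Suc k) (Suc k) + coeff ([:a, 1:] ^ Suc k) k"
    by simp
  also have "\<dots> = a + of_nat (Suc k) * a"
    unfolding Suc.IH coeff_linear_power by simp
  finally show ?case
    by (simp add: algebra_simps)
qed simp

lemma coeff_pcompose_shift:
  fixes p :: "'a::comm_semiring_1 poly"
  assumes "degree p \<le> Suc k"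
  shows "coeff (p \<circ>\<^sub>p [:a, 1:]) k = coeff p k + of_nat (Suc k) * a * coeff p (Suc k)"
proof -
  define c where "c i = coeff p i * coeff ([:a, 1:] ^ i) k" for i
  have "coeff (p \<circ>\<^sub>p [:a, 1:]) k = (\<Sum>i\<le>Suc k. c i)"
    unfolding pcompose_as_sum_of_powers[OF assms] c_def by (simp add: coeff_sum)
  also have "\<dots> = (\<Sum>i<k. c i) + c k + c (Suc k)"
    by (simp only: lessThan_Suc_atMost[symmetric] sum.lessThan_Suc)
  also have "(\<Sum>i<k. c i) = 0"
    unfolding c_def by (intro sum.neutral) (simp add: coeff_eq_0 degree_linear_power)
  finally show ?thesis
    unfolding c_def coeff_linear_power coeff_linear_power_below by (simp add: mult_ac)
qed

lemma shift_difference_poly: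
  fixes p :: "'a::comm_ring_1 poly" and a b :: 'a
  assumes "degree p \<le> Suc k"
  defines "q \<equiv> p \<circ>\<^sub>p [:a, 1:] - p \<circ>\<^sub>p [:b, 1:]"
  shows "degree q \<le> k" and "coeff q k = of_nat (Suc k) * (a - b) * coeff p (Suc k)"
proof -
  have deg: "degree (p \<circ>\<^sub>p [:c, 1:]) \<le> Suc k" for c
    using degree_pcompose_le[of p "[:c, 1:]"] assms by (auto simp: degree_pCons_eq_if)
  have top: "coeff (p \<circ>\<^sub>p [:c, 1:]) (Suc k) = coeff p (Suc k)" for c
    using coeff_pcompose_shift[of p "Suc k" c] assms by (simp add: coeff_eq_0)
  show "degree q \<le> k"
  proof (rule degree_le, intro allI impI)
    fix i assume "k < i"
    then consider "i = Suc k" | "Suc k < i"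
      by linarith
    then show "coeff q i = 0"
    proof cases
      case 2
      then have "coeff (p \<circ>\<^sub>p [:c, 1:]) i = 0" for c
        using deg[of c] by (intro coeff_eq_0) linarith
      then show ?thesis
        by (simp add: q_def)
    qed (simp add: q_def top)
  qed
  show "coeff q k = of_nat (Suc k) * (a - b) * coeff p (Suc k)"
    unfolding q_def using assms by (simp add: coeff_pcompose_shift algebra_simps)
qed

lemma coeff_pcompose_linear_top:
  fixes p :: "'a::idom poly"
  assumes "degree p \<le> k" "L \<noteq> 0"
  shows "degree (p \<circ>\<^sub>p [:c, L:]) \<le> k" and "coeff (p \<circ>\<^sub>p [:c, L:]) k = coeff p k * L ^ k"
proof -
  have lin: "degree [:c, L:] = 1"
    using assms(2) by simp
  then show "degree (p \<circ>\<^sub>p [:c, L:]) \<le> k"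
    using assms(1) by (simp add: degree_pcompose)
  show "coeff (p \<circ>\<^sub>p [:c, L:]) k = coeff p k * L ^ k"
  proof (cases "degree p = k")
    case True
    then show ?thesis
      using lead_coeff_comp[of "[:c, L:]" p] lin by (simp add: degree_pcompose)
  next
    case False
    with assms(1) lin show ?thesis
      by (simp add: coeff_eq_0 degree_pcompose)
  qed
qed

definition rats_denom_le :: "nat \<Rightarrow> real set" where
  "rats_denom_le M = {of_int a / of_int b | a b. 1 \<le> b \<and> b \<le> int M}"

lemma rats_denom_le_mono: "M \<le> M' \<Longrightarrow> rats_denom_le M \<subseteq> rats_denom_le M'"
  unfolding rats_denom_le_def by force

lemma Ints_subset_rats_denom_le: "M \<ge> 1 \<Longrightarrow> \<int> \<subseteq> rats_denom_le M"
  unfolding rats_denom_le_def by (force elim!: Ints_cases)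

lemma rats_denom_le_of_mult:
  assumes "c \<noteq> 0" "x * of_int c \<in> rats_denom_le M"
  shows "x \<in> rats_denom_le (M * nat \<bar>c\<bar>)"
proof -
  obtain a b :: int where ab: "1 \<le> b" "b \<le> int M" "x * of_int c = of_int a / of_int b"
    using assms(2) unfolding rats_denom_le_def by auto
  have "x = of_int (sgn c * a) / of_int (b * \<bar>c\<bar>)"
    using ab(1,3) assms(1) by (auto simp: field_simps abs_if sgn_if)
  moreover have "1 \<le> b * \<bar>c\<bar>"
    using ab(1) assms(1) mult_mono[of 1 b 1 "\<bar>c\<bar>"] by simp
  moreover have "b * \<bar>c\<bar> \<le> int (M * nat \<bar>c\<bar>)"
    using ab(2) by (simp add: mult_right_mono)
  ultimately show ?thesis
    unfolding rats_denom_le_def by blast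
qed

lemma rats_denom_le_coprime:
  assumes "x \<in> rats_denom_le M"
  obtains p q :: int where "coprime p q" "1 \<le> q" "q \<le> int M" "x = of_int p / of_int q"
proof -
  obtain a b :: int where ab: "1 \<le> b" "b \<le> int M" "x = of_int a / of_int b"
    using assms unfolding rats_denom_le_def by auto
  define g where "g = gcd a b"
  define p q where "p = a div g" and "q = b div g"
  have g: "g > 0" "a = p * g" "b = q * g"
    using ab(1) unfolding g_def p_def q_def by auto
  have "coprime p q"
    unfolding p_def q_def g_def using ab(1) by (intro div_gcd_coprime) auto
  moreover have "1 \<le> q"
    using g ab(1) by (metis int_one_le_iff_zero_less zero_less_mult_pos2)
  moreover have "q \<le> int M"
    using g ab(2) \<open>1 \<le> q\<close> by (smt (verit) mult_le_cancel_left1)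
  moreover have "x = of_int p / of_int q"
    unfolding ab(3) g(2,3) using g(1) by simp
  ultimately show ?thesis
    using that by blast
qed

lemma rats_denom_le_mult_power_diff_Ints:
  assumes "\<alpha> \<in> rats_denom_le B" "n mod fact B = r mod fact B"
  shows "\<alpha> * (real n ^ j - real r ^ j) \<in> \<int>"
proof -
  obtain a b :: int where ab: "1 \<le> b" "b \<le> int B" "\<alpha> = of_int a / of_int b"
    using assms(1) unfolding rats_denom_le_def by auto
  have "nat b dvd fact B"
    using ab by (intro dvd_fact) auto
  then have "b dvd int (fact B)"
    using ab(1) by (metis int_dvd_int_iff int_nat_eq order.strict_trans1 zero_less_one less_le)
  moreover have "(n ^ j) mod fact B = (r ^ j) mod fact B"
    using assms(2) by (metis power_mod)
  then have "int (fact B) dvd int (n ^ j) - int (r ^ j)"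
    by (metis mod_eq_dvd_iff of_nat_mod)
  ultimately obtain t where t: "int (n ^ j) - int (r ^ j) = b * t"
    by (meson dvd_trans dvdE)
  have "\<alpha> * (real n ^ j - real r ^ j) = of_int a / of_int b * of_int (int (n ^ j) - int (r ^ j))"
    unfolding ab(3) by simp
  also have "\<dots> = of_int (a * t)"
    unfolding t using ab(1) by simp
  finally show ?thesis
    by simp
qed

lemma weyl_sum_cong:
  "(\<And>n. 1 \<le> n \<Longrightarrow> n \<le> N \<Longrightarrow> e (x n) = e (y n)) \<Longrightarrow> weyl_sum N x = weyl_sum N y"
  unfolding weyl_sum_def by (intro sum.cong) auto

lemma norm_weyl_sum_linear_le:
  assumes "\<beta> \<notin> \<int>"
  shows "norm (weyl_sum N (\<lambda>n. \<beta> * real n + \<gamma>)) \<le> 2 / norm (1 - e \<beta>)"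
proof -
  have "e \<beta> \<noteq> 1"
    using assms e_eq_1_iff by blast
  then have "(\<Sum>n=1..N. e \<beta> ^ n) = (e \<beta> - e \<beta> ^ Suc N) / (1 - e \<beta>)"
    by (cases "N = 0") (simp, subst sum_gp, simp)
  moreover have "norm (e \<beta> - e \<beta> ^ Suc N) \<le> 2"
    using norm_triangle_ineq4[of "e \<beta>" "e \<beta> ^ Suc N"] by (simp add: norm_power norm_mult)
  ultimately have "norm (\<Sum>n=1..N. e \<beta> ^ n) \<le> 2 / norm (1 - e \<beta>)"
    by (simp add: norm_divide divide_right_mono)
  moreover have "weyl_sum N (\<lambda>n. \<beta> * real n + \<gamma>) = e \<gamma> * (\<Sum>n=1..N. e \<beta> ^ n)"
    by (simp add: weyl_sum_def e_add e_power sum_distrib_left mult_ac)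
  ultimately show ?thesis
    by (simp add: norm_mult)
qed

lemma poly_degree_le_1:
  assumes "degree p \<le> 1"
  shows "poly p x = coeff p 1 * x + coeff p 0"
proof -
  have "p = [:coeff p 0, coeff p 1:]"
    using assms by (intro poly_eqI) (auto simp: coeff_pCons coeff_eq_0 split: nat.split)
  then show ?thesis
    by (metis add.commute mult.commute poly_pCons mult_zero_right poly_0 add_0_right)
qed

lemma eventually_weyl_sum_le_by_differencing:
  assumes "\<epsilon> > 0" "8 / \<epsilon>\<^sup>2 \<le> real H"
    and diff: "\<And>a b. a < H \<Longrightarrow> b < H \<Longrightarrow> a \<noteq> b \<Longrightarrow>
      \<forall>\<^sub>F N in sequentially. norm (weyl_sum N (\<lambda>n. x (n + a) - x (n + b))) \<le> \<epsilon>\<^sup>2 / 8 * real N"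
  shows "\<forall>\<^sub>F N in sequentially. norm (weyl_sum N x) \<le> \<epsilon> * real N"
proof -
  have "0 < 8 / \<epsilon>\<^sup>2"
    using assms(1) by simp
  then have H: "H \<ge> 1"
    using assms(2) by linarith
  have "1 / real H \<le> \<epsilon>\<^sup>2 / 8"
    using assms(1,2) H by (simp add: field_simps)
  then have sqrt: "sqrt (1 / real H + \<epsilon>\<^sup>2 / 8) \<le> \<epsilon> / 2"
    using assms(1) by (intro real_le_lsqrt) (auto simp: power_divide)
  have "\<forall>\<^sub>F N in sequentially. \<forall>ab\<in>{..<H} \<times> {..<H}. fst ab \<noteq> snd ab \<longrightarrow>
      norm (weyl_sum N (\<lambda>n. x (n + fst ab) - x (n + snd ab))) \<le> \<epsilon>\<^sup>2 / 8 * real N"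
    using diff by (intro eventually_ball_finite) auto
  moreover have "\<forall>\<^sub>F N in sequentially. 2 * real H \<le> \<epsilon> / 2 * real N"
    using assms(1) by (intro eventually_le_mult_real) simp
  ultimately show ?thesis
  proof eventually_elim
    case (elim N)
    then have "norm (weyl_sum N x) \<le> real N * sqrt (1 / real H + \<epsilon>\<^sup>2 / 8) + 2 * real H"
      using assms(1) H by (intro van_der_Corput) auto
    also have "\<dots> \<le> real N * (\<epsilon> / 2) + \<epsilon> / 2 * real N"
      using sqrt elim(2) by (intro add_mono mult_left_mono) auto
    finally show ?case
      by simp
  qed
qed

lemma differenced_coeff_notin_rats_denom_le:
  fixes p :: "real poly"
  assumes "degree p \<le> Suc k" "coeff p (Suc k) \<notin> rats_denom_le (M * (Suc k * H))"
    and "a < H" "b < H" "a \<noteq> b"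
  shows "coeff (p \<circ>\<^sub>p [:real a, 1:] - p \<circ>\<^sub>p [:real b, 1:]) k \<notin> rats_denom_le M"
proof
  define c where "c = int (Suc k) * (int a - int b)"
  assume "coeff (p \<circ>\<^sub>p [:real a, 1:] - p \<circ>\<^sub>p [:real b, 1:]) k \<in> rats_denom_le M"
  then have "coeff p (Suc k) * of_int c \<in> rats_denom_le M"
    using shift_difference_poly(2)[OF assms(1)] by (simp add: c_def mult_ac)
  moreover have "c \<noteq> 0"
    using assms(5) by (simp add: c_def)
  ultimately have "coeff p (Suc k) \<in> rats_denom_le (M * nat \<bar>c\<bar>)"
    by (intro rats_denom_le_of_mult)
  moreover have "nat \<bar>c\<bar> \<le> Suc k * H"
  proof -
    have "\<bar>int a - int b\<bar> \<le> int H"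
      using assms(3,4) by linarith
    then have "\<bar>c\<bar> \<le> int (Suc k) * int H"
      unfolding c_def abs_mult abs_of_nat by (intro mult_left_mono) simp_all
    then have "\<bar>c\<bar> \<le> int (Suc k * H)"
      by (simp add: algebra_simps)
    then show ?thesis
      by linarith
  qed
  ultimately show False
    using assms(2) rats_denom_le_mono[of "M * nat \<bar>c\<bar>" "M * (Suc k * H)"] by auto
qed

theorem weyl_sum_poly_eventually_small:
  assumes "k \<ge> 1" "\<epsilon> > 0"
  shows "\<exists>M\<ge>1. \<forall>p::real poly. degree p \<le> k \<longrightarrow> coeff p k \<notin> rats_denom_le M \<longrightarrow>
           (\<forall>\<^sub>F N in sequentially. norm (weyl_sum N (\<lambda>n. poly p (real n))) \<le> \<epsilon> * real N)"
  using assms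
proof (induction k arbitrary: \<epsilon> rule: nat_induct_at_least)
  case base
  show ?case
  proof (intro exI[of _ 1] conjI allI impI)
    fix p :: "real poly"
    assume p: "degree p \<le> 1" "coeff p 1 \<notin> rats_denom_le 1"
    then have "coeff p 1 \<notin> \<int>"
      using Ints_subset_rats_denom_le[of 1] by auto
    then have "norm (weyl_sum N (\<lambda>n. poly p (real n))) \<le> 2 / norm (1 - e (coeff p 1))" for N
      using norm_weyl_sum_linear_le p(1) by (simp add: poly_degree_le_1)
    moreover have "\<forall>\<^sub>F N in sequentially. 2 / norm (1 - e (coeff p 1)) \<le> \<epsilon> * real N"
      using base by (intro eventually_le_mult_real)
    ultimately show "\<forall>\<^sub>F N in sequentially. norm (weyl_sum N (\<lambda>n. poly p (real n))) \<le> \<epsilon> * real N"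
      by (auto elim!: eventually_mono intro: order_trans)
  qed simp
next
  case (Suc k)
  obtain M where M: "M \<ge> 1" "\<And>q. degree q \<le> k \<Longrightarrow> coeff q k \<notin> rats_denom_le M \<Longrightarrow>
      \<forall>\<^sub>F N in sequentially. norm (weyl_sum N (\<lambda>n. poly q (real n))) \<le> \<epsilon>\<^sup>2 / 8 * real N"
    using Suc.IH[of "\<epsilon>\<^sup>2 / 8"] Suc.prems by auto
  define H where "H = nat \<lceil>8 / \<epsilon>\<^sup>2\<rceil>"
  show ?case
  proof (intro exI[of _ "M * (Suc k * Suc H)"] conjI allI impI)
    show "M * (Suc k * Suc H) \<ge> 1"
      using M(1) by simp
    fix p :: "real poly"
    assume p: "degree p \<le> Suc k" "coeff p (Suc k) \<notin> rats_denom_le (M * (Suc k * Suc H))"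
    show "\<forall>\<^sub>F N in sequentially. norm (weyl_sum N (\<lambda>n. poly p (real n))) \<le> \<epsilon> * real N"
    proof (rule eventually_weyl_sum_le_by_differencing[OF Suc.prems])
      show "8 / \<epsilon>\<^sup>2 \<le> real (Suc H)"
        unfolding H_def by linarith
      fix a b assume ab: "a < Suc H" "b < Suc H" "a \<noteq> b"
      define q where "q = p \<circ>\<^sub>p [:real a, 1:] - p \<circ>\<^sub>p [:real b, 1:]"
      have "poly q (real n) = poly p (real (n + a)) - poly p (real (n + b))" for n
        by (simp add: q_def poly_pcompose add.commute)
      moreover have "\<forall>\<^sub>F N in sequentially. norm (weyl_sum N (\<lambda>n. poly q (real n))) \<le> \<epsilon>\<^sup>2 / 8 * real N"
        using M(2) shift_difference_poly(1)[OF p(1)] differenced_coeff_notin_rats_denom_le[OF p ab]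
        unfolding q_def by blast
      ultimately show "\<forall>\<^sub>F N in sequentially.
          norm (weyl_sum N (\<lambda>n. poly p (real (n + a)) - poly p (real (n + b)))) \<le> \<epsilon>\<^sup>2 / 8 * real N"
        by simp
    qed
  qed
qed

text \<open>The thresholds \<open>m (d + 1 - k)\<close> for the coefficients grow so fast (\<open>m (i + 1) \<ge> g (m i)\<close>)
  that, whichever coefficient is the highest one failing its threshold, all coefficients above it
  are rationals whose denominators are negligible against its own threshold.\<close>
lemma exists_top_coeff_notin_rats_denom_le:
  fixes g :: "nat \<Rightarrow> nat" and d :: nat
  obtains M where "M \<ge> 1"
    "\<And>\<alpha>. \<exists>k\<in>{1..d}. \<alpha> k \<notin> rats_denom_le M \<Longrightarrow>
      \<exists>k\<in>{1..d}. \<exists>B. \<alpha> k \<notin> rats_denom_le (g B) \<and> (\<forall>j\<in>{k<..d}. \<alpha> j \<in> rats_denom_le B)"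
proof -
  define m where "m = rec_nat (1::nat) (\<lambda>_ r. max r (g r))"
  have m_Suc: "m (Suc i) = max (m i) (g (m i))" for i
    by (simp add: m_def)
  have m_mono: "i \<le> j \<Longrightarrow> m i \<le> m j" for i j
    using incseq_SucI[of m] m_Suc by (simp add: incseq_def)
  have "m d \<ge> 1"
    using m_mono[of 0 d] by (simp add: m_def)
  moreover have "\<exists>k\<in>{1..d}. \<exists>B. \<alpha> k \<notin> rats_denom_le (g B) \<and> (\<forall>j\<in>{k<..d}. \<alpha> j \<in> rats_denom_le B)"
    if notin: "\<exists>k\<in>{1..d}. \<alpha> k \<notin> rats_denom_le (m d)" for \<alpha> :: "nat \<Rightarrow> real"
  proof -
    define K where "K = {k\<in>{1..d}. \<alpha> k \<notin> rats_denom_le (m (Suc d - k))}"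
    obtain k0 where "k0 \<in> {1..d}" "\<alpha> k0 \<notin> rats_denom_le (m d)"
      using notin by blast
    moreover have "rats_denom_le (m (Suc d - k0)) \<subseteq> rats_denom_le (m d)"
      using \<open>k0 \<in> {1..d}\<close> by (intro rats_denom_le_mono m_mono) auto
    ultimately have "k0 \<in> K"
      unfolding K_def by blast
    define k where "k = Max K"
    have "finite K"
      by (simp add: K_def)
    then have k: "k \<in> K" "\<And>j. j \<in> K \<Longrightarrow> j \<le> k"
      using \<open>k0 \<in> K\<close> unfolding k_def by (auto intro: Max_in)
    then have "k \<in> {1..d}" "g (m (d - k)) \<le> m (Suc d - k)"
      using m_Suc[of "d - k"] by (auto simp: K_def Suc_diff_le)
    then have "\<alpha> k \<notin> rats_denom_le (g (m (d - k)))"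
      using k(1) rats_denom_le_mono[of "g (m (d - k))" "m (Suc d - k)"] unfolding K_def by blast
    moreover have "\<alpha> j \<in> rats_denom_le (m (d - k))" if "j \<in> {k<..d}" for j
    proof -
      have "j \<notin> K" "j \<in> {1..d}"
        using k(2)[of j] that \<open>k \<in> {1..d}\<close> by auto
      then have "\<alpha> j \<in> rats_denom_le (m (Suc d - j))"
        unfolding K_def by blast
      moreover have "Suc d - j \<le> d - k"
        using that by auto
      ultimately show ?thesis
        using rats_denom_le_mono[OF m_mono] by blast
    qed
    ultimately show ?thesis
      using \<open>k \<in> {1..d}\<close> by blast
  qed
  ultimately show ?thesis
    using that by blast
qed

lemma weyl_sum_mult_eq_sum_residues:
  "weyl_sum (L * M) x = (\<Sum>r=1..L. weyl_sum M (\<lambda>i. x (L * (i - 1) + r)))"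
proof (induction M)
  case (Suc M)
  have "{1..L * Suc M} = {1..L * M} \<union> {L * M + 1..L * M + L}"
    by auto
  then have "weyl_sum (L * Suc M) x = weyl_sum (L * M) x + (\<Sum>n=L * M + 1..L * M + L. e (x n))"
    unfolding weyl_sum_def by (simp add: sum.union_disjoint)
  also have "(\<Sum>n=L * M + 1..L * M + L. e (x n)) = (\<Sum>r=1..L. e (x (L * M + r)))"
    using sum.shift_bounds_cl_nat_ivl[of "\<lambda>n. e (x n)" 1 "L * M" L] by (simp add: add.commute)
  finally show ?case
    unfolding Suc.IH by (simp add: weyl_sum_def sum.distrib sum.cl_ivl_Suc)
qed (simp add: weyl_sum_def)

lemma norm_weyl_sum_le_residues:
  assumes "L \<ge> 1"
  shows "norm (weyl_sum N x)
    \<le> (\<Sum>r=1..L. norm (weyl_sum (N div L) (\<lambda>i. x (L * (i - 1) + r)))) + real L"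
proof -
  define K where "K = L * (N div L)"
  have "K \<le> N" "N - K < L"
    using assms unfolding K_def by (auto simp: minus_mult_div_eq_mod)
  then have "{1..N} = {1..K} \<union> {K + 1..N}"
    by auto
  then have "norm (weyl_sum N x) = norm (weyl_sum K x + (\<Sum>n=K + 1..N. e (x n)))"
    unfolding weyl_sum_def by (simp add: sum.union_disjoint)
  also have "\<dots> \<le> norm (weyl_sum K x) + norm (\<Sum>n=K + 1..N. e (x n))"
    by (rule norm_triangle_ineq)
  moreover have "norm (\<Sum>n=K + 1..N. e (x n)) \<le> real L"
    using norm_sum[of "\<lambda>n. e (x n)" "{K + 1..N}"] \<open>N - K < L\<close> by simp
  moreover have "norm (weyl_sum K x) \<le> (\<Sum>r=1..L. norm (weyl_sum (N div L) (\<lambda>i. x (L * (i - 1) + r))))"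
    unfolding K_def weyl_sum_mult_eq_sum_residues by (rule norm_sum)
  ultimately show ?thesis
    by linarith
qed

text \<open>On the residue class \<open>n = B! (i - 1) + r\<close> the terms of degree above \<open>k\<close> are constant
  modulo one, so the polynomial becomes one of degree \<open>k\<close> in \<open>i\<close>.\<close>
lemma residue_class_poly:
  fixes \<alpha> :: "nat \<Rightarrow> real"
  assumes "1 \<le> k" "k \<le> d" "\<forall>j\<in>{k<..d}. \<alpha> j \<in> rats_denom_le B"
  obtains q :: "real poly" where "degree q \<le> k" "coeff q k = \<alpha> k * fact B ^ k"
    "\<And>i. 1 \<le> i \<Longrightarrow> e (\<Sum>j=1..d. \<alpha> j * real (fact B * (i - 1) + r) ^ j) = e (poly q (real i))"
proof -
  define L :: real where "L = fact B"
  define low where "low = (\<Sum>j=1..k. monom (\<alpha> j) j)"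
  define c where "c = (\<Sum>j\<in>{k<..d}. \<alpha> j * real r ^ j)"
  define q where "q = low \<circ>\<^sub>p [:real r - L, L:] + [:c:]"
  have low: "degree low \<le> k" "coeff low k = \<alpha> k" "poly low y = (\<Sum>j=1..k. \<alpha> j * y ^ j)" for y
    unfolding low_def using assms(1)
    by (auto intro!: degree_sum_le order_trans[OF degree_monom_le]
        simp: coeff_sum poly_sum poly_monom)
  have "L \<noteq> 0"
    by (simp add: L_def)
  note lin = coeff_pcompose_linear_top[OF low(1) this, of "real r - L"]
  have "degree q \<le> k"
    unfolding q_def using lin(1) assms(1) by (intro degree_add_le) auto
  moreover have "coeff q k = \<alpha> k * fact B ^ k"
    unfolding q_def using lin(2) low(2) assms(1) by (simp add: L_def coeff_eq_0)
  moreover have "e (\<Sum>j=1..d. \<alpha> j * real (fact B * (i - 1) + r) ^ j) = e (poly q (real i))"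
    if i: "1 \<le> i" for i
  proof -
    define n where "n = fact B * (i - 1) + r"
    obtain i' where "i = Suc i'"
      using i by (cases i) auto
    then have "poly [:real r - L, L:] (real i) = real n"
      unfolding n_def L_def by (simp add: algebra_simps)
    then have low_n: "poly q (real i) = (\<Sum>j=1..k. \<alpha> j * real n ^ j) + c"
      by (simp add: q_def poly_pcompose low(3))
    have high_n: "(\<Sum>j\<in>{k<..d}. \<alpha> j * real n ^ j) = c + (\<Sum>j\<in>{k<..d}. \<alpha> j * (real n ^ j - real r ^ j))"
      by (simp add: c_def right_diff_distrib sum_subtractf)
    have "{1..d} = {1..k} \<union> {k<..d}"
      using assms(1,2) by auto
    then have "(\<Sum>j=1..d. \<alpha> j * real n ^ j) = (\<Sum>j\<in>{1..k} \<union> {k<..d}. \<alpha> j * real n ^ j)"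
      by simp
    also have "\<dots> = (\<Sum>j=1..k. \<alpha> j * real n ^ j) + (\<Sum>j\<in>{k<..d}. \<alpha> j * real n ^ j)"
      by (rule sum.union_disjoint) auto
    also have "\<dots> = poly q (real i) + (\<Sum>j\<in>{k<..d}. \<alpha> j * (real n ^ j - real r ^ j))"
      unfolding low_n high_n by simp
    finally have split: "(\<Sum>j=1..d. \<alpha> j * real n ^ j)
        = poly q (real i) + (\<Sum>j\<in>{k<..d}. \<alpha> j * (real n ^ j - real r ^ j))" .
    have "n mod fact B = r mod fact B"
      by (simp add: n_def)
    then have "(\<Sum>j\<in>{k<..d}. \<alpha> j * (real n ^ j - real r ^ j)) \<in> \<int>"
      using assms(3) rats_denom_le_mult_power_diff_Ints by (intro Ints_sum) blast
    then show ?thesis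
      unfolding n_def[symmetric] split by (rule e_add_Ints)
  qed
  ultimately show ?thesis
    using that by blast
qed

lemma weyl_sum_eventually_small_of_top_coeff:
  fixes \<alpha> :: "nat \<Rightarrow> real"
  assumes "1 \<le> k" "k \<le> d" "\<forall>j\<in>{k<..d}. \<alpha> j \<in> rats_denom_le B" "\<epsilon> > 0"
    and small: "\<And>q. degree q \<le> k \<Longrightarrow> coeff q k = \<alpha> k * fact B ^ k \<Longrightarrow>
      \<forall>\<^sub>F N in sequentially. norm (weyl_sum N (\<lambda>n. poly q (real n))) \<le> \<epsilon> * real N"
  shows "\<forall>\<^sub>F N in sequentially. norm (weyl_sum N (\<lambda>n. \<Sum>j=1..d. \<alpha> j * real n ^ j)) \<le> 2 * \<epsilon> * real N"
proof -
  define L :: nat where "L = fact B"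
  define P where "P n = (\<Sum>j=1..d. \<alpha> j * real n ^ j)" for n
  have "\<forall>r. \<exists>q. \<forall>\<^sub>F N in sequentially.
      norm (weyl_sum N (\<lambda>i. P (L * (i - 1) + r))) \<le> \<epsilon> * real N"
  proof
    fix r
    obtain q where q: "degree q \<le> k" "coeff q k = \<alpha> k * fact B ^ k"
      "\<And>i. 1 \<le> i \<Longrightarrow> e (P (L * (i - 1) + r)) = e (poly q (real i))"
      using residue_class_poly[OF assms(1-3), of r] unfolding P_def L_def by blast
    have "weyl_sum N (\<lambda>i. P (L * (i - 1) + r)) = weyl_sum N (\<lambda>n. poly q (real n))" for N
      using q(3) by (intro weyl_sum_cong) auto
    then show "\<exists>q. \<forall>\<^sub>F N in sequentially. norm (weyl_sum N (\<lambda>i. P (L * (i - 1) + r))) \<le> \<epsilon> * real N"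
      using small[OF q(1,2)] by simp
  qed
  then have "\<forall>\<^sub>F N in sequentially. \<forall>r\<in>{1..L}.
      norm (weyl_sum N (\<lambda>i. P (L * (i - 1) + r))) \<le> \<epsilon> * real N"
    by (intro eventually_ball_finite) auto
  then obtain N0 where N0: "\<And>N r. N \<ge> N0 \<Longrightarrow> r \<in> {1..L} \<Longrightarrow>
      norm (weyl_sum N (\<lambda>i. P (L * (i - 1) + r))) \<le> \<epsilon> * real N"
    unfolding eventually_sequentially by blast
  have "L \<ge> 1"
    by (simp add: L_def)
  have "\<forall>\<^sub>F N in sequentially. L * N0 \<le> N \<and> real L \<le> \<epsilon> * real N"
    using assms(4) by (intro eventually_conj eventually_ge_at_top eventually_le_mult_real)
  then show ?thesis
  proof eventually_elim
    case (elim N)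
    have "N0 \<le> N div L"
      using div_le_mono[OF conjunct1[OF elim], of L] \<open>L \<ge> 1\<close> by simp
    have "norm (weyl_sum N P) \<le> (\<Sum>r=1..L. norm (weyl_sum (N div L) (\<lambda>i. P (L * (i - 1) + r)))) + real L"
      using norm_weyl_sum_le_residues[OF \<open>L \<ge> 1\<close>] .
    also have "\<dots> \<le> (\<Sum>r=1..L. \<epsilon> * real (N div L)) + \<epsilon> * real N"
      using N0[OF \<open>N0 \<le> N div L\<close>] elim by (intro add_mono sum_mono) auto
    also have "(\<Sum>r=1..L. \<epsilon> * real (N div L)) \<le> \<epsilon> * real N"
    proof -
      have "real L * real (N div L) \<le> real N"
        by (metis of_nat_le_iff of_nat_mult times_div_less_eq_dividend)
      then have "\<epsilon> * (real L * real (N div L)) \<le> \<epsilon> * real N"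
        using assms(4) by (intro mult_left_mono) auto
      then show ?thesis
        by (simp add: mult_ac)
    qed
    finally show ?case
      by (simp add: P_def[abs_def])
  qed
qed

theorem weyl_sum_eventually_small:
  assumes "\<epsilon> > 0"
  obtains M where "M \<ge> 1"
    "\<And>\<alpha>. \<exists>k\<in>{1..d}. \<alpha> k \<notin> rats_denom_le M \<Longrightarrow>
      \<forall>\<^sub>F N in sequentially. norm (weyl_sum N (\<lambda>n. \<Sum>k=1..d. \<alpha> k * real n ^ k)) \<le> \<epsilon> * real N"
proof -
  have "\<forall>k\<in>{1..d}. \<exists>M\<ge>1. \<forall>p::real poly. degree p \<le> k \<longrightarrow> coeff p k \<notin> rats_denom_le M \<longrightarrow>
      (\<forall>\<^sub>F N in sequentially. norm (weyl_sum N (\<lambda>n. poly p (real n))) \<le> \<epsilon> / 2 * real N)"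
  proof
    fix k :: nat assume "k \<in> {1..d}"
    then show "\<exists>M\<ge>1. \<forall>p::real poly. degree p \<le> k \<longrightarrow> coeff p k \<notin> rats_denom_le M \<longrightarrow>
      (\<forall>\<^sub>F N in sequentially. norm (weyl_sum N (\<lambda>n. poly p (real n))) \<le> \<epsilon> / 2 * real N)"
      using assms by (intro weyl_sum_poly_eventually_small) auto
  qed
  from bchoice[OF this] obtain Mk where Mk: "\<forall>k\<in>{1..d}. Mk k \<ge> 1 \<and> (\<forall>p::real poly. degree p \<le> k \<longrightarrow>
      coeff p k \<notin> rats_denom_le (Mk k) \<longrightarrow>
      (\<forall>\<^sub>F N in sequentially. norm (weyl_sum N (\<lambda>n. poly p (real n))) \<le> \<epsilon> / 2 * real N))"
    by blast
  define g where "g B = (\<Sum>k=1..d. Mk k) * fact B ^ d" for B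
  obtain M where M: "M \<ge> 1"
    "\<And>\<alpha>. \<exists>k\<in>{1..d}. \<alpha> k \<notin> rats_denom_le M \<Longrightarrow>
      \<exists>k\<in>{1..d}. \<exists>B. \<alpha> k \<notin> rats_denom_le (g B) \<and> (\<forall>j\<in>{k<..d}. \<alpha> j \<in> rats_denom_le B)"
    using exists_top_coeff_notin_rats_denom_le by blast
  show ?thesis
  proof (rule that[OF M(1)])
    fix \<alpha> :: "nat \<Rightarrow> real"
    assume "\<exists>k\<in>{1..d}. \<alpha> k \<notin> rats_denom_le M"
    then obtain k B where k: "k \<in> {1..d}" "\<alpha> k \<notin> rats_denom_le (g B)"
      "\<forall>j\<in>{k<..d}. \<alpha> j \<in> rats_denom_le B"
      using M(2) by blast
    have "\<alpha> k * fact B ^ k \<notin> rats_denom_le (Mk k)"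
    proof
      assume "\<alpha> k * fact B ^ k \<in> rats_denom_le (Mk k)"
      then have "\<alpha> k \<in> rats_denom_le (Mk k * nat \<bar>int (fact B ^ k)\<bar>)"
        by (intro rats_denom_le_of_mult) auto
      then have "\<alpha> k \<in> rats_denom_le (Mk k * fact B ^ k)"
        by (simp only: abs_of_nat nat_int)
      moreover have "Mk k * fact B ^ k \<le> g B"
        unfolding g_def using k(1)
        by (intro mult_mono member_le_sum power_increasing) (auto simp: Suc_le_eq)
      ultimately show False
        using k(2) rats_denom_le_mono[of "Mk k * fact B ^ k" "g B"] by auto
    qed
    then have "\<forall>\<^sub>F N in sequentially.
        norm (weyl_sum N (\<lambda>n. \<Sum>j=1..d. \<alpha> j * real n ^ j)) \<le> 2 * (\<epsilon> / 2) * real N"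
      using k(1,3) assms Mk by (intro weyl_sum_eventually_small_of_top_coeff[of k d]) auto
    then show "\<forall>\<^sub>F N in sequentially.
        norm (weyl_sum N (\<lambda>n. \<Sum>k=1..d. \<alpha> k * real n ^ k)) \<le> \<epsilon> * real N"
      by simp
  qed
qed

section \<open>The Fejer kernel and an Erdos-Turan inequality\<close>

definition fejer_kernel :: "nat \<Rightarrow> real \<Rightarrow> real" where
  "fejer_kernel R u = (norm (\<Sum>j<R. e (real j * u)))\<^sup>2 / real R"

lemma fejer_kernel_nonneg: "fejer_kernel R u \<ge> 0"
  by (simp add: fejer_kernel_def)

lemma fejer_kernel_expand:
  "complex_of_real (fejer_kernel R u) = (\<Sum>j<R. \<Sum>j'<R. e ((real j - real j') * u)) / of_nat R"
  unfolding fejer_kernel_def of_real_divide norm_sum_e_squared by (simp add: left_diff_distrib)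

lemma fejer_kernel_add_Ints:
  assumes "z \<in> \<int>"
  shows "fejer_kernel R (u + z) = fejer_kernel R u"
proof -
  have "e (real j * (u + z)) = e (real j * u)" for j
    using assms unfolding distrib_left by (intro e_add_Ints) auto
  then show ?thesis
    by (simp add: fejer_kernel_def)
qed

lemma norm_1_minus_e_squared: "(norm (1 - e u))\<^sup>2 = 2 - 2 * cos (2 * pi * u)"
proof -
  have "(norm (1 - e u))\<^sup>2 = (1 - cos (2 * pi * u))\<^sup>2 + (sin (2 * pi * u))\<^sup>2"
    unfolding cmod_power2 e_def by simp
  also have "\<dots> = 2 - 2 * cos (2 * pi * u)"
    using sin_cos_squared_add[of "2 * pi * u"] by (simp add: power2_eq_square algebra_simps)
  finally show ?thesis .
qed

lemma norm_1_minus_e_pos: "0 < u \<Longrightarrow> u < 1 \<Longrightarrow> norm (1 - e u) > 0"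
  using e_eq_1_iff[of u] by (auto elim!: Ints_cases)

lemma norm_1_minus_e_le:
  assumes "0 < \<rho>" "\<rho> \<le> 1/2" "\<rho> \<le> u" "u \<le> 1 - \<rho>"
  shows "norm (1 - e \<rho>) \<le> norm (1 - e u)"
proof -
  have "cos (2 * pi * u) \<le> cos (2 * pi * \<rho>)"
  proof (cases "u \<le> 1/2")
    case True
    then show ?thesis
      using assms by (intro cos_monotone_0_pi_le) auto
  next
    case False
    then have "cos (2 * pi * (1 - u)) \<le> cos (2 * pi * \<rho>)"
      using assms by (intro cos_monotone_0_pi_le) auto
    moreover have "cos (2 * pi * (1 - u)) = cos (2 * pi * u)"
      using cos_2pi_minus[of "2 * pi * u"] by (simp add: algebra_simps)
    ultimately show ?thesis
      by simp
  qed
  then have "(norm (1 - e \<rho>))\<^sup>2 \<le> (norm (1 - e u))\<^sup>2"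
    by (simp add: norm_1_minus_e_squared)
  then show ?thesis
    by (rule power2_le_imp_le) simp
qed

lemma fejer_kernel_le:
  assumes "R \<ge> 1" "0 < \<rho>" "\<rho> \<le> 1/2" "\<rho> \<le> u" "u \<le> 1 - \<rho>"
  shows "fejer_kernel R u \<le> 4 / (real R * (norm (1 - e \<rho>))\<^sup>2)"
proof -
  have pos: "norm (1 - e \<rho>) > 0"
    using assms(2,3) by (intro norm_1_minus_e_pos) auto
  have le: "norm (1 - e \<rho>) \<le> norm (1 - e u)"
    using norm_1_minus_e_le assms(2-5) .
  then have "e u \<noteq> 1"
    using pos by auto
  have "(\<Sum>j<R. e (real j * u)) = (\<Sum>j<R. e u ^ j)"
    by (simp add: e_power)
  also have "\<dots> = (1 - e u ^ R) / (1 - e u)"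
    using \<open>e u \<noteq> 1\<close> by (simp add: sum_gp_strict)
  finally have "(\<Sum>j<R. e (real j * u)) = (1 - e u ^ R) / (1 - e u)" .
  moreover have "norm (1 - e u ^ R) \<le> 2"
    using norm_triangle_ineq4[of 1 "e u ^ R"] by (simp add: norm_power)
  ultimately have "norm (\<Sum>j<R. e (real j * u)) \<le> 2 / norm (1 - e \<rho>)"
    using pos le by (auto simp: norm_divide intro!: frac_le)
  then have "(norm (\<Sum>j<R. e (real j * u)))\<^sup>2 \<le> (2 / norm (1 - e \<rho>))\<^sup>2"
    by (intro power_mono) auto
  then show ?thesis
    using assms(1) by (simp add: fejer_kernel_def power_divide divide_right_mono field_simps)
qed

lemma sum_e_multiples_eq_0:
  fixes h :: int
  assumes "h \<noteq> 0" "\<bar>h\<bar> < int R"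
  shows "(\<Sum>i<R. e (real i * (of_int h / real R))) = 0"
proof -
  define w where "w = e (of_int h / real R)"
  have R: "R > 0"
    using assms by simp
  have "w \<noteq> 1"
  proof
    assume "w = 1"
    then have "of_int h / real R \<in> \<int>"
      unfolding w_def e_eq_1_iff .
    then obtain z where "of_int h / real R = of_int z"
      by (rule Ints_cases)
    then have "real_of_int h = real_of_int (z * int R)"
      using R by (simp add: field_simps)
    then have "\<bar>h\<bar> = \<bar>z\<bar> * int R"
      by (simp only: of_int_eq_iff abs_mult abs_of_nat)
    moreover have "1 \<le> \<bar>z\<bar>"
      using assms(1) \<open>\<bar>h\<bar> = \<bar>z\<bar> * int R\<close> by (cases "z = 0") auto
    then have "int R \<le> \<bar>z\<bar> * int R"
      using mult_right_mono[of 1 "\<bar>z\<bar>" "int R"] by simp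
    ultimately show False
      using assms(2) by linarith
  qed
  have "w ^ R = 1"
    unfolding w_def e_power using R by (simp add: e_eq_1_iff)
  have "(\<Sum>i<R. e (real i * (of_int h / real R))) = (\<Sum>i<R. w ^ i)"
    by (simp add: w_def e_power)
  also have "\<dots> = 0"
    using \<open>w \<noteq> 1\<close> \<open>w ^ R = 1\<close> by (simp add: sum_gp_strict)
  finally show ?thesis .
qed

text \<open>The \<open>R\<close> translates of the Fejer kernel by multiples of \<open>1/R\<close> form a partition of unity
  (scaled by \<open>R\<close>), since only the diagonal terms survive the summation over the translates.\<close>
lemma fejer_kernel_sum_translates:
  assumes "R \<ge> 1"
  shows "(\<Sum>i<R. fejer_kernel R (t - (c + real i) / real R)) = real R"
proof -
  define X where "X j j' = e ((real j - real j') * (t - c / real R))" for j j' :: nat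
  define Y where "Y i j j' = e (real i * (of_int (int j' - int j) / real R))" for i j j' :: nat
  have split: "e ((real j - real j') * (t - (c + real i) / real R)) = X j j' * Y i j j'" for i j j'
    unfolding X_def Y_def e_add[symmetric] by (simp add: algebra_simps add_divide_distrib diff_divide_distrib)
  have Y: "(\<Sum>i<R. Y i j j') = (if j = j' then of_nat R else 0)" if "j < R" "j' < R" for j j'
    using that sum_e_multiples_eq_0[of "int j' - int j" R] unfolding Y_def by auto
  have "complex_of_real (\<Sum>i<R. fejer_kernel R (t - (c + real i) / real R))
      = (\<Sum>i<R. \<Sum>j<R. \<Sum>j'<R. X j j' * Y i j j') / of_nat R"
    by (simp add: fejer_kernel_expand split sum_divide_distrib)
  also have "(\<Sum>i<R. \<Sum>j<R. \<Sum>j'<R. X j j' * Y i j j') = (\<Sum>j<R. \<Sum>i<R. \<Sum>j'<R. X j j' * Y i j j')"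
    by (rule sum.swap)
  also have "\<dots> = (\<Sum>j<R. \<Sum>j'<R. X j j' * (\<Sum>i<R. Y i j j'))"
    unfolding sum_distrib_left by (intro sum.cong refl sum.swap)
  also have "\<dots> = (\<Sum>j<R. X j j * of_nat R)"
  proof (intro sum.cong refl)
    fix j assume "j \<in> {..<R}"
    then have "(\<Sum>j'<R. X j j' * (\<Sum>i<R. Y i j j')) = (\<Sum>j'<R. if j' = j then X j j * of_nat R else 0)"
      using Y by (intro sum.cong) auto
    then show "(\<Sum>j'<R. X j j' * (\<Sum>i<R. Y i j j')) = X j j * of_nat R"
      using \<open>j \<in> {..<R}\<close> by simp
  qed
  also have "\<dots> = of_nat R * of_nat R"
    by (simp add: X_def)
  finally have "complex_of_real (\<Sum>i<R. fejer_kernel R (t - (c + real i) / real R))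
      = complex_of_real (real R)"
    using assms by simp
  then show ?thesis
    by (simp only: of_real_eq_iff)
qed

lemma sum_fejer_kernel_le:
  assumes "R \<ge> 1" "\<eta> \<ge> 0"
    and weyl: "\<And>h::int. h \<noteq> 0 \<Longrightarrow> \<bar>h\<bar> < int R \<Longrightarrow> norm (weyl_sum N (\<lambda>n. of_int h * x n)) \<le> \<eta> * real N"
  shows "(\<Sum>n=1..N. fejer_kernel R (x n - s)) \<le> real N * (1 + real R * \<eta>)"
proof -
  define E where "E j j' = e (- (real j - real j') * s)" for j j' :: nat
  define W where "W j j' = weyl_sum N (\<lambda>n. (real j - real j') * x n)" for j j' :: nat
  have split: "e ((real j - real j') * (x n - s)) = E j j' * e ((real j - real j') * x n)" for j j' n
    unfolding E_def e_add[symmetric] by (simp add: algebra_simps)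
  have "complex_of_real (\<Sum>n=1..N. fejer_kernel R (x n - s))
      = (\<Sum>n=1..N. \<Sum>j<R. \<Sum>j'<R. E j j' * e ((real j - real j') * x n)) / of_nat R"
    by (simp add: fejer_kernel_expand split sum_divide_distrib)
  also have "(\<Sum>n=1..N. \<Sum>j<R. \<Sum>j'<R. E j j' * e ((real j - real j') * x n))
      = (\<Sum>j<R. \<Sum>n=1..N. \<Sum>j'<R. E j j' * e ((real j - real j') * x n))"
    by (rule sum.swap)
  also have "\<dots> = (\<Sum>j<R. \<Sum>j'<R. E j j' * W j j')"
    unfolding W_def weyl_sum_def sum_distrib_left by (intro sum.cong refl sum.swap)
  finally have eq: "complex_of_real (\<Sum>n=1..N. fejer_kernel R (x n - s))
      = (\<Sum>j<R. \<Sum>j'<R. E j j' * W j j') / of_nat R" .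
  have "(\<Sum>n=1..N. fejer_kernel R (x n - s)) \<le> norm (complex_of_real (\<Sum>n=1..N. fejer_kernel R (x n - s)))"
    by (metis Re_complex_of_real complex_Re_le_cmod)
  also have "\<dots> \<le> (\<Sum>j<R. \<Sum>j'<R. norm (W j j')) / real R"
    unfolding eq norm_divide norm_of_nat
    by (intro divide_right_mono order_trans[OF norm_sum] sum_mono) (simp_all add: E_def norm_mult)
  also have "\<dots> \<le> (\<Sum>j<R. \<Sum>j'<R. if j = j' then real N else \<eta> * real N) / real R"
  proof (intro divide_right_mono sum_mono)
    fix j j' assume "j \<in> {..<R}" "j' \<in> {..<R}"
    then show "norm (W j j') \<le> (if j = j' then real N else \<eta> * real N)"
      using weyl[of "int j - int j'"] by (auto simp: W_def weyl_sum_def)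
  qed simp
  also have "\<dots> \<le> (real R * real N + real R * real R * (\<eta> * real N)) / real R"
    using assms(2) by (intro divide_right_mono sum_diagonal_le) auto
  also have "\<dots> = real N * (1 + real R * \<eta>)"
    using assms(1) by (simp add: field_simps)
  finally show ?thesis .
qed

lemma card_lessThan_le_real:
  assumes "X \<ge> -1"
  shows "real (card {i\<in>{..<R}. real i \<le> X}) \<le> X + 1"
proof (cases "X < 0")
  case True
  then have empty: "{i\<in>{..<R}. real i \<le> X} = {}"
    by auto
  show ?thesis
    unfolding empty using assms by simp
next
  case False
  have "{i\<in>{..<R}. real i \<le> X} \<subseteq> {..<nat (\<lfloor>X\<rfloor> + 1)}"
  proof
    fix i assume "i \<in> {i\<in>{..<R}. real i \<le> X}"
    then have "int i \<le> \<lfloor>X\<rfloor>"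
      by (simp add: le_floor_iff)
    then show "i \<in> {..<nat (\<lfloor>X\<rfloor> + 1)}"
      by simp
  qed
  then have "card {i\<in>{..<R}. real i \<le> X} \<le> nat (\<lfloor>X\<rfloor> + 1)"
    using card_mono[of "{..<nat (\<lfloor>X\<rfloor> + 1)}"] by fastforce
  then have "real (card {i\<in>{..<R}. real i \<le> X}) \<le> of_int (\<lfloor>X\<rfloor> + 1)"
    using False by linarith
  then show ?thesis
    by linarith
qed

text \<open>The translates not counted lie at distance at least \<open>\<rho>\<close> from \<open>t\<close> modulo one, so by
  the tail bound they carry almost none of the total mass \<open>R\<close>.\<close>
lemma fejer_kernel_sum_near_ge:
  assumes "R \<ge> 1" "0 < \<rho>" "\<rho> \<le> 1/2"
    and c: "(a - \<rho>) * real R \<le> c" "c < (a - \<rho>) * real R + 1"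
    and t: "a \<le> t" "t < b"
  shows "real R - 4 / (norm (1 - e \<rho>))\<^sup>2
    \<le> (\<Sum>i\<in>{i\<in>{..<R}. c + real i \<le> (b + \<rho>) * real R}. fejer_kernel R (t - (c + real i) / real R))"
proof -
  define G where "G = {i\<in>{..<R}. c + real i \<le> (b + \<rho>) * real R}"
  define F where "F i = fejer_kernel R (t - (c + real i) / real R)" for i
  define \<sigma> where "\<sigma> = 4 / (real R * (norm (1 - e \<rho>))\<^sup>2)"
  have R: "real R > 0"
    using assms(1) by simp
  have far: "F i \<le> \<sigma>" if "i \<in> {..<R} - G" for i
  proof -
    have "b + \<rho> < (c + real i) / real R" "(c + real i) / real R < a - \<rho> + 1"
      using that c R by (auto simp: G_def field_simps)
    then have "\<rho> \<le> t - (c + real i) / real R + 1" "t - (c + real i) / real R + 1 \<le> 1 - \<rho>"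
      using t by linarith+
    then have "fejer_kernel R (t - (c + real i) / real R + 1) \<le> \<sigma>"
      unfolding \<sigma>_def using assms(1-3) by (intro fejer_kernel_le) auto
    then show ?thesis
      unfolding F_def using fejer_kernel_add_Ints[of 1] by simp
  qed
  have "real R = (\<Sum>i\<in>{..<R} - G. F i) + (\<Sum>i\<in>G. F i)"
    using fejer_kernel_sum_translates[OF assms(1), of t c] sum.subset_diff[of G "{..<R}" F]
    unfolding F_def G_def by auto
  also have "(\<Sum>i\<in>{..<R} - G. F i) \<le> real (card ({..<R} - G)) * \<sigma>"
    by (rule sum_bounded_above) (rule far)
  also have "\<dots> \<le> real R * \<sigma>"
    using card_mono[of "{..<R}" "{..<R} - G"] R by (intro mult_right_mono) (auto simp: \<sigma>_def)
  also have "real R * \<sigma> = 4 / (norm (1 - e \<rho>))\<^sup>2"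
    using R by (simp add: \<sigma>_def)
  finally show ?thesis
    unfolding F_def G_def by simp
qed

lemma indicator_le_fejer_kernel_sum:
  assumes "R \<ge> 1" "0 < \<rho>" "\<rho> \<le> 1/2"
    and c: "(a - \<rho>) * real R \<le> c" "c < (a - \<rho>) * real R + 1"
  shows "(if frac u \<in> {a..<b} then 1 else 0)
    \<le> (\<Sum>i\<in>{i\<in>{..<R}. c + real i \<le> (b + \<rho>) * real R}. fejer_kernel R (u - (c + real i) / real R)) / real R
      + 4 / (real R * (norm (1 - e \<rho>))\<^sup>2)"
proof -
  define S where
    "S v = (\<Sum>i\<in>{i\<in>{..<R}. c + real i \<le> (b + \<rho>) * real R}. fejer_kernel R (v - (c + real i) / real R))"
    for v
  have R: "real R > 0"
    using assms(1) by simp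
  have "frac u - v = (u - v) + of_int (- \<lfloor>u\<rfloor>)" for v
    by (simp add: frac_def)
  then have S_frac: "S (frac u) = S u"
    unfolding S_def by (simp only: fejer_kernel_add_Ints Ints_of_int)
  show ?thesis
  proof (cases "frac u \<in> {a..<b}")
    case True
    then have "real R - 4 / (norm (1 - e \<rho>))\<^sup>2 \<le> S u"
      using fejer_kernel_sum_near_ge[OF assms, of "frac u" b] S_frac unfolding S_def by auto
    then have "(real R - 4 / (norm (1 - e \<rho>))\<^sup>2) / real R \<le> S u / real R"
      using R by (intro divide_right_mono) auto
    moreover have "(real R - 4 / (norm (1 - e \<rho>))\<^sup>2) / real R + 4 / (real R * (norm (1 - e \<rho>))\<^sup>2) = 1"
      using R by (simp add: diff_divide_distrib mult.commute)
    ultimately show ?thesis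
      unfolding if_P[OF True] S_def by linarith
  next
    case False
    have "0 \<le> S u"
      unfolding S_def by (auto intro: sum_nonneg fejer_kernel_nonneg)
    with R show ?thesis
      unfolding if_not_P[OF False] S_def by simp
  qed
qed

lemma card_translates_le:
  assumes "(a - \<rho>) * real R \<le> c" "c < (a - \<rho>) * real R + 1" "0 < \<rho>" "a \<le> b"
  shows "real (card {i\<in>{..<R}. c + real i \<le> (b + \<rho>) * real R}) \<le> (b - a + 2 * \<rho>) * real R + 1"
proof -
  have "{i\<in>{..<R}. c + real i \<le> (b + \<rho>) * real R} = {i\<in>{..<R}. real i \<le> (b + \<rho>) * real R - c}"
    by (auto simp: algebra_simps)
  moreover have "(b + \<rho>) * real R - c \<ge> -1"
    using assms by (smt (verit) mult_right_mono of_nat_0_le_iff)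
  ultimately have "real (card {i\<in>{..<R}. c + real i \<le> (b + \<rho>) * real R}) \<le> (b + \<rho>) * real R - c + 1"
    using card_lessThan_le_real by presburger
  then show ?thesis
    using assms(1) by (simp add: algebra_simps)
qed

lemma card_frac_in_interval_le:
  assumes "R \<ge> 1" "0 < \<rho>" "\<rho> \<le> 1/2" "\<eta> \<ge> 0" "0 \<le> a" "a \<le> b"
    and weyl: "\<And>h::int. h \<noteq> 0 \<Longrightarrow> \<bar>h\<bar> < int R \<Longrightarrow> norm (weyl_sum N (\<lambda>n. of_int h * x n)) \<le> \<eta> * real N"
  shows "real (card {n\<in>{1..N}. frac (x n) \<in> {a..<b}})
    \<le> real N * (b - a + 2 * \<rho> + 1 / real R + real R * \<eta> + 4 / (real R * (norm (1 - e \<rho>))\<^sup>2))"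
proof -
  define c :: real where "c = of_int \<lceil>(a - \<rho>) * real R\<rceil>"
  define G where "G = {i\<in>{..<R}. c + real i \<le> (b + \<rho>) * real R}"
  define \<sigma> where "\<sigma> = 4 / (real R * (norm (1 - e \<rho>))\<^sup>2)"
  have R: "real R > 0"
    using assms(1) by simp
  have c: "(a - \<rho>) * real R \<le> c" "c < (a - \<rho>) * real R + 1"
    unfolding c_def by linarith+
  have "real (card {n\<in>{1..N}. frac (x n) \<in> {a..<b}}) = (\<Sum>n=1..N. if frac (x n) \<in> {a..<b} then 1 else 0)"
    by (simp add: sum.inter_filter[symmetric])
  also have "\<dots> \<le> (\<Sum>n=1..N. (\<Sum>i\<in>G. fejer_kernel R (x n - (c + real i) / real R)) / real R + \<sigma>)"
    unfolding G_def \<sigma>_def by (intro sum_mono indicator_le_fejer_kernel_sum[OF assms(1-3) c])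
  also have "\<dots> = (\<Sum>i\<in>G. \<Sum>n=1..N. fejer_kernel R (x n - (c + real i) / real R)) / real R + real N * \<sigma>"
    by (simp add: sum.distrib sum_divide_distrib[symmetric] sum.swap[of _ G])
  also have "\<dots> \<le> (\<Sum>i\<in>G. real N * (1 + real R * \<eta>)) / real R + real N * \<sigma>"
    using sum_fejer_kernel_le[OF assms(1,4) weyl] R by (intro add_mono divide_right_mono sum_mono) auto
  also have "\<dots> = real N * (real (card G) / real R + real (card G) * \<eta>) + real N * \<sigma>"
    using R by (simp add: field_simps)
  also have "\<dots> \<le> real N * ((b - a + 2 * \<rho>) + 1 / real R + real R * \<eta>) + real N * \<sigma>"
  proof -
    have "real (card G) / real R \<le> (b - a + 2 * \<rho>) + 1 / real R"
      using card_translates_le[OF c assms(2,6)] R unfolding G_def by (simp add: field_simps)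
    moreover have "card G \<le> R"
      using card_mono[of "{..<R}" G] unfolding G_def by auto
    then have "real (card G) * \<eta> \<le> real R * \<eta>"
      using assms(4) by (simp add: mult_right_mono)
    ultimately show ?thesis
      by (intro add_mono mult_left_mono) auto
  qed
  finally show ?thesis
    by (simp add: \<sigma>_def algebra_simps)
qed

lemma discrepancy_le_of_card_le:
  assumes "N \<ge> 1" "\<gamma> \<ge> 0"
    and card: "\<And>a b. 0 \<le> a \<Longrightarrow> a \<le> b \<Longrightarrow> b \<le> 1 \<Longrightarrow>
      real (card {n\<in>{1..N}. frac (x n) \<in> {a..<b}}) \<le> real N * (b - a + \<gamma>)"
  shows "discrepancy N x \<le> 2 * \<gamma>"
proof -
  define cnt where "cnt a b = real (card {n\<in>{1..N}. frac (x n) \<in> {a..<b}})" for a b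
  have N: "real N > 0"
    using assms(1) by simp
  have each: "\<bar>cnt a b / real N - (b - a)\<bar> \<le> 2 * \<gamma>" if ab: "0 \<le> a" "a \<le> b" "b \<le> 1" for a b
  proof -
    define A where "A u v = {n\<in>{1..N}. frac (x n) \<in> {u..<v}}" for u v
    have U: "{1..N} = (A 0 a \<union> A a b) \<union> A b 1"
      unfolding A_def using ab frac_lt_1 by auto
    have "card {1..N} = card (A 0 a \<union> A a b) + card (A b 1)"
      unfolding U using ab by (intro card_Un_disjoint) (auto simp: A_def)
    also have "card (A 0 a \<union> A a b) = card (A 0 a) + card (A a b)"
      by (intro card_Un_disjoint) (auto simp: A_def)
    finally have "real N = cnt 0 a + cnt a b + cnt b 1"
      unfolding cnt_def A_def by simp
    moreover have "cnt 0 a \<le> real N * (a + \<gamma>)" "cnt a b \<le> real N * (b - a + \<gamma>)"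
      "cnt b 1 \<le> real N * (1 - b + \<gamma>)"
      using card[of 0 a] card[of a b] card[of b 1] ab unfolding cnt_def by auto
    ultimately have "real N * (b - a - 2 * \<gamma>) \<le> cnt a b" "cnt a b \<le> real N * (b - a + \<gamma>)"
      by (auto simp: algebra_simps)
    then have "b - a - 2 * \<gamma> \<le> cnt a b / real N" "cnt a b / real N \<le> b - a + \<gamma>"
      using N by (auto simp: field_simps)
    then show ?thesis
      using assms(2) by linarith
  qed
  show ?thesis
    unfolding discrepancy_def
  proof (rule cSUP_least)
    have "(0, 0) \<in> {(a, b). 0 \<le> a \<and> a \<le> b \<and> b \<le> (1::real)}"
      by simp
    then show "{(a, b). 0 \<le> a \<and> a \<le> b \<and> b \<le> (1::real)} \<noteq> {}"
      by blast
  next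
    fix ab assume "ab \<in> {(a, b). 0 \<le> a \<and> a \<le> b \<and> b \<le> (1::real)}"
    then show "\<bar>real (card {n \<in> {1..N}. frac (x n) \<in> {fst ab..<snd ab}}) / real N - (snd ab - fst ab)\<bar>
        \<le> 2 * \<gamma>"
      using each[of "fst ab" "snd ab"] unfolding cnt_def by auto
  qed
qed

theorem discrepancy_le_weyl_sums:
  assumes "R \<ge> 1" "N \<ge> 1" "0 < \<rho>" "\<rho> \<le> 1/2" "\<eta> \<ge> 0"
    and "\<And>h::int. h \<noteq> 0 \<Longrightarrow> \<bar>h\<bar> < int R \<Longrightarrow> norm (weyl_sum N (\<lambda>n. of_int h * x n)) \<le> \<eta> * real N"
  shows "discrepancy N x \<le> 2 * (2 * \<rho> + 1 / real R + real R * \<eta> + 4 / (real R * (norm (1 - e \<rho>))\<^sup>2))"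
proof (rule discrepancy_le_of_card_le[OF assms(2)])
  show "0 \<le> 2 * \<rho> + 1 / real R + real R * \<eta> + 4 / (real R * (norm (1 - e \<rho>))\<^sup>2)"
    using assms by simp
  show "real (card {n\<in>{1..N}. frac (x n) \<in> {a..<b}})
      \<le> real N * (b - a + (2 * \<rho> + 1 / real R + real R * \<eta> + 4 / (real R * (norm (1 - e \<rho>))\<^sup>2)))"
    if "0 \<le> a" "a \<le> b" "b \<le> 1" for a b
    using card_frac_in_interval_le[OF assms(1,3-5) that(1,2) assms(6)] by (simp add: algebra_simps)
qed

section \<open>Polynomial sequences of large discrepancy\<close>

lemma small_weyl_sums_imp_small_discrepancy:
  assumes "\<delta> > 0"
  obtains R \<eta> where "R \<ge> 1" "\<eta> > 0"
    "\<And>N x. N \<ge> 1 \<Longrightarrow>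
      (\<And>h::int. h \<noteq> 0 \<Longrightarrow> \<bar>h\<bar> < int R \<Longrightarrow> norm (weyl_sum N (\<lambda>n. of_int h * x n)) \<le> \<eta> * real N) \<Longrightarrow>
      discrepancy N x \<le> 4 * \<delta>"
proof -
  define \<rho> where "\<rho> = min \<delta> (1/2) / 2"
  define \<kappa> where "\<kappa> = (norm (1 - e \<rho>))\<^sup>2"
  have \<rho>: "0 < \<rho>" "\<rho> \<le> 1/2" "2 * \<rho> \<le> \<delta>"
    using assms unfolding \<rho>_def by auto
  have \<kappa>: "\<kappa> > 0"
    using \<rho> norm_1_minus_e_pos[of \<rho>] unfolding \<kappa>_def by simp
  define R where "R = nat \<lceil>(2 + 8 / \<kappa>) / \<delta>\<rceil> + 1"
  define \<eta> where "\<eta> = \<delta> / (2 * real R)"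
  have R: "R \<ge> 1" "real R > 0"
    unfolding R_def by auto
  have "(2 + 8 / \<kappa>) / \<delta> \<le> real R"
    unfolding R_def by linarith
  then have "1 / real R + 4 / (real R * \<kappa>) \<le> \<delta> / 2"
    using assms \<kappa> R by (simp add: field_simps)
  moreover have "real R * \<eta> = \<delta> / 2"
    using R unfolding \<eta>_def by simp
  ultimately have "2 * \<rho> + 1 / real R + real R * \<eta> + 4 / (real R * \<kappa>) \<le> 2 * \<delta>"
    using \<rho>(3) by linarith
  then have bound: "2 * (2 * \<rho> + 1 / real R + real R * \<eta> + 4 / (real R * \<kappa>)) \<le> 4 * \<delta>"
    using mult_left_mono[of _ "2 * \<delta>" 2] by simp
  have "\<eta> > 0"
    using assms R unfolding \<eta>_def by simp
  then show ?thesis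
  proof (rule that[OF R(1)])
    fix N x assume "N \<ge> 1" and weyl: "\<And>h::int. h \<noteq> 0 \<Longrightarrow> \<bar>h\<bar> < int R \<Longrightarrow>
      norm (weyl_sum N (\<lambda>n. of_int h * x n)) \<le> \<eta> * real N"
    have "discrepancy N x \<le> 2 * (2 * \<rho> + 1 / real R + real R * \<eta> + 4 / (real R * \<kappa>))"
      unfolding \<kappa>_def using \<open>\<eta> > 0\<close>
      by (intro discrepancy_le_weyl_sums[OF R(1) \<open>N \<ge> 1\<close> \<rho>(1,2)] weyl) auto
    then show "discrepancy N x \<le> 4 * \<delta>"
      using bound by linarith
  qed
qed

lemma weyl_sums_of_multiples_eventually_small:
  assumes "\<epsilon> > 0"
  obtains M where "M \<ge> 1"
    "\<And>\<alpha>. \<exists>k\<in>{1..d}. \<alpha> k \<notin> rats_denom_le (M * R) \<Longrightarrow>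
      \<forall>\<^sub>F N in sequentially. \<forall>h::int. h \<noteq> 0 \<and> \<bar>h\<bar> < int R \<longrightarrow>
        norm (weyl_sum N (\<lambda>n. of_int h * (\<Sum>k=1..d. \<alpha> k * real n ^ k))) \<le> \<epsilon> * real N"
proof -
  obtain M where M: "M \<ge> 1"
    "\<And>\<alpha>. \<exists>k\<in>{1..d}. \<alpha> k \<notin> rats_denom_le M \<Longrightarrow>
      \<forall>\<^sub>F N in sequentially. norm (weyl_sum N (\<lambda>n. \<Sum>k=1..d. \<alpha> k * real n ^ k)) \<le> \<epsilon> * real N"
    by (rule weyl_sum_eventually_small[OF assms]) (rule that)
  show ?thesis
  proof (rule that[OF M(1)])
    fix \<alpha> :: "nat \<Rightarrow> real"
    assume "\<exists>k\<in>{1..d}. \<alpha> k \<notin> rats_denom_le (M * R)"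
    then obtain k where k: "k \<in> {1..d}" "\<alpha> k \<notin> rats_denom_le (M * R)"
      by blast
    define Hs where "Hs = {h::int. h \<noteq> 0 \<and> \<bar>h\<bar> < int R}"
    have "\<forall>h\<in>Hs. \<forall>\<^sub>F N in sequentially.
        norm (weyl_sum N (\<lambda>n. of_int h * (\<Sum>k=1..d. \<alpha> k * real n ^ k))) \<le> \<epsilon> * real N"
    proof
      fix h assume h: "h \<in> Hs"
      have "of_int h * \<alpha> k \<notin> rats_denom_le M"
      proof
        assume "of_int h * \<alpha> k \<in> rats_denom_le M"
        then have "\<alpha> k \<in> rats_denom_le (M * nat \<bar>h\<bar>)"
          using h unfolding Hs_def by (intro rats_denom_le_of_mult) (auto simp: mult.commute)
        moreover have "nat \<bar>h\<bar> \<le> R"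
          using h unfolding Hs_def by (simp add: nat_le_iff)
        then have "M * nat \<bar>h\<bar> \<le> M * R"
          by simp
        ultimately show False
          using k(2) rats_denom_le_mono by blast
      qed
      then have "\<forall>\<^sub>F N in sequentially.
          norm (weyl_sum N (\<lambda>n. \<Sum>k=1..d. (of_int h * \<alpha> k) * real n ^ k)) \<le> \<epsilon> * real N"
        using k(1) by (intro M(2)) blast
      then show "\<forall>\<^sub>F N in sequentially.
          norm (weyl_sum N (\<lambda>n. of_int h * (\<Sum>k=1..d. \<alpha> k * real n ^ k))) \<le> \<epsilon> * real N"
        by (simp add: sum_distrib_left mult.assoc)
    qed
    moreover have "finite Hs"
      unfolding Hs_def by (rule finite_subset[of _ "{- int R..int R}"]) auto
    ultimately show "\<forall>\<^sub>F N in sequentially. \<forall>h::int. h \<noteq> 0 \<and> \<bar>h\<bar> < int R \<longrightarrow>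
        norm (weyl_sum N (\<lambda>n. of_int h * (\<Sum>k=1..d. \<alpha> k * real n ^ k))) \<le> \<epsilon> * real N"
      unfolding Hs_def by (auto dest: eventually_ball_finite)
  qed
qed

lemma coeffs_in_rats_denom_le_if_discrepancy_large:
  fixes \<delta> :: real and d :: nat
  assumes "\<delta> > 0"
  obtains M where "M > 0"
    "\<And>\<alpha>. \<forall>\<^sub>F N in sequentially. discrepancy N (\<lambda>n. \<Sum>k=1..d. \<alpha> k * real n ^ k) > 4 * \<delta> \<Longrightarrow>
      \<forall>k\<in>{1..d}. \<alpha> k \<in> rats_denom_le M"
proof -
  obtain R \<eta> where R: "R \<ge> 1" and \<eta>: "\<eta> > 0"
    and disc: "\<And>N x. N \<ge> 1 \<Longrightarrow>
      (\<And>h::int. h \<noteq> 0 \<Longrightarrow> \<bar>h\<bar> < int R \<Longrightarrow> norm (weyl_sum N (\<lambda>n. of_int h * x n)) \<le> \<eta> * real N) \<Longrightarrow>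
      discrepancy N x \<le> 4 * \<delta>"
    by (rule small_weyl_sums_imp_small_discrepancy[OF assms]) (rule that; blast)
  obtain M where M: "M \<ge> 1"
    "\<And>\<alpha>. \<exists>k\<in>{1..d}. \<alpha> k \<notin> rats_denom_le (M * R) \<Longrightarrow>
      \<forall>\<^sub>F N in sequentially. \<forall>h::int. h \<noteq> 0 \<and> \<bar>h\<bar> < int R \<longrightarrow>
        norm (weyl_sum N (\<lambda>n. of_int h * (\<Sum>k=1..d. \<alpha> k * real n ^ k))) \<le> \<eta> * real N"
    by (rule weyl_sums_of_multiples_eventually_small[OF \<eta>]) (rule that)
  have "M * R > 0"
    using M(1) R by simp
  moreover have "\<forall>k\<in>{1..d}. \<alpha> k \<in> rats_denom_le (M * R)"
    if large: "\<forall>\<^sub>F N in sequentially. discrepancy N (\<lambda>n. \<Sum>k=1..d. \<alpha> k * real n ^ k) > 4 * \<delta>"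
    for \<alpha> :: "nat \<Rightarrow> real"
  proof (rule ccontr)
    assume "\<not> (\<forall>k\<in>{1..d}. \<alpha> k \<in> rats_denom_le (M * R))"
    then have "\<forall>\<^sub>F N in sequentially. \<forall>h::int. h \<noteq> 0 \<and> \<bar>h\<bar> < int R \<longrightarrow>
        norm (weyl_sum N (\<lambda>n. of_int h * (\<Sum>k=1..d. \<alpha> k * real n ^ k))) \<le> \<eta> * real N"
      by (intro M(2)) blast
    then have "\<forall>\<^sub>F N in sequentially. False"
      using large eventually_ge_at_top[of 1]
    proof eventually_elim
      case (elim N)
      then have "discrepancy N (\<lambda>n. \<Sum>k=1..d. \<alpha> k * real n ^ k) \<le> 4 * \<delta>"
        by (intro disc) auto
      then show False
        using elim(2) by simp
    qed
    then show False
      by simp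
  qed
  ultimately show ?thesis
    using that by blast
qed

theorem theorem5:
  fixes \<delta> :: real and d :: nat
  assumes "\<delta> > 0" and "d \<ge> 1"
  shows "\<exists>M::nat. M > 0 \<and>
    (\<forall>\<alpha> :: nat \<Rightarrow> real.
      \<alpha> d \<noteq> 0 \<longrightarrow>
      (\<forall>\<^sub>F N in sequentially. \<forall>\<eta> :: nat \<Rightarrow> real.
          (\<forall>n\<in>{1..N}. \<bar>\<eta> n\<bar> \<le> \<delta>) \<longrightarrow>
          discrepancy N (\<lambda>n. (\<Sum>k=1..d. \<alpha> k * real n ^ k) + \<eta> n) > 4 * \<delta>) \<longrightarrow>
      (\<forall>\<^sub>F N in sequentially. \<forall>k\<in>{1..d}. \<exists>p q :: int.
          coprime p q \<and> 1 \<le> q \<and> q \<le> int M \<and>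
          \<bar>\<alpha> k - real_of_int p / real_of_int q\<bar>
            \<le> real N powr (- (fact (k + 2) / (2 * fact (d + 2))))))"
proof -
  obtain M where M: "M > 0"
    "\<And>\<alpha>. \<forall>\<^sub>F N in sequentially. discrepancy N (\<lambda>n. \<Sum>k=1..d. \<alpha> k * real n ^ k) > 4 * \<delta> \<Longrightarrow>
      \<forall>k\<in>{1..d}. \<alpha> k \<in> rats_denom_le M"
    by (rule coeffs_in_rats_denom_le_if_discrepancy_large[OF assms(1)]) (rule that)
  show ?thesis
  proof (intro exI[of _ M] conjI allI impI)
    fix \<alpha> :: "nat \<Rightarrow> real"
    assume "\<forall>\<^sub>F N in sequentially. \<forall>\<eta> :: nat \<Rightarrow> real. (\<forall>n\<in>{1..N}. \<bar>\<eta> n\<bar> \<le> \<delta>) \<longrightarrow>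
      discrepancy N (\<lambda>n. (\<Sum>k=1..d. \<alpha> k * real n ^ k) + \<eta> n) > 4 * \<delta>"
    then have "\<forall>\<^sub>F N in sequentially. discrepancy N (\<lambda>n. \<Sum>k=1..d. \<alpha> k * real n ^ k) > 4 * \<delta>"
      by eventually_elim (use assms(1) in \<open>auto dest: spec[of _ "\<lambda>_. 0"]\<close>)
    then have "\<forall>k\<in>{1..d}. \<alpha> k \<in> rats_denom_le M"
      by (rule M(2))
    then have "\<forall>k\<in>{1..d}. \<exists>p q :: int. coprime p q \<and> 1 \<le> q \<and> q \<le> int M \<and>
        \<bar>\<alpha> k - real_of_int p / real_of_int q\<bar> \<le> real N powr (- (fact (k + 2) / (2 * fact (d + 2))))" for N
      by (metis rats_denom_le_coprime diff_self abs_zero powr_ge_zero)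
    then show "\<forall>\<^sub>F N in sequentially. \<forall>k\<in>{1..d}. \<exists>p q :: int. coprime p q \<and> 1 \<le> q \<and> q \<le> int M \<and>
        \<bar>\<alpha> k - real_of_int p / real_of_int q\<bar> \<le> real N powr (- (fact (k + 2) / (2 * fact (d + 2))))"
      by (simp add: always_eventually)
  qed (use M(1) in simp)
qed

end
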